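(* Suppose $\mathcal U$ is regular enough that each functional $\phi^q_k:=\delta_{y_k}\circ L_q$ ($q=1,\dots,Q$, $k=1,\dots,K$) belongs to the dual $\mathcal U^\star$. Consider the problem $$\min_{v^1,\dots,v^M\in\mathcal U,\ G\in\mathcal P}\ \|G\|_{\mathcal P}^2+\lambda\sum_{m=1}^M\|v^m\|_{\mathcal U}^2\quad\text{s.t.}\quad v^m(Y^m)=u^m(Y^m),\ \ (G+\overline P)(\Phi(v^m,y_k))=f^m(y_k)\ \ \forall m,\ \forall k.$$ Then every minimizer $(\widehat u^1,\dots,\widehat u^M,\widehat P)$ can be written as $$\widehat u^m(y)=\mathsf U(\phi,y)^T\widehat\alpha^m,\qquad \widehat P(s)=\mathsf P(S(\widehat{\boldsymbol\alpha}),s)^T\widehat\beta,$$ where $(\widehat{\boldsymbol\alpha},\widehat\beta)$, $\widehat{\boldsymbol\alpha}=(\widehat\alpha^1,\dots,\widehat\alpha^M)\in(\mathbb R^{QK})^M$, $\widehat\beta\in\mathbb R^{MK}$, solves $$\min_{\boldsymbol\alpha\in(\mathbb R^{QK})^M,\ \beta\in\mathbb R^{MK}}\ \beta^T\mathsf P(S(\boldsymbol\alpha),S(\boldsymbol\alpha))\beta+\lambda\sum_{m=1}^M(\alpha^m)^T\mathsf U(\phi,\phi)\alpha^m$$ subject to $\mathsf U(\phi,Y^m)^T\alpha^m=u^m(Y^m)$ and $\mathsf P(S(\boldsymbol\alpha),S^m(\alpha^m))^T\beta=f^m(Y)-\overline P(S^m(\alpha^m))$ for $m=1,\dots,M$.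
   Context: Setting: $\mathcal Y\subset\mathbb R^d$; known linear differential operators $L_1=\mathrm{Id},L_2,\dots,L_Q$; $\mathcal S=\mathbb R^{Q+d}$; $\Phi(v,y)=(y,L_1v(y),\dots,L_Qv(y))\in\mathcal S$. $\mathsf U:\mathcal Y\times\mathcal Y\to\mathbb R$ and $\mathsf P:\mathcal S\times\mathcal S\to\mathbb R$ are positive definite symmetric kernels with RKHSs $\mathcal U$, $\mathcal P$; $\overline P:\mathcal S\to\mathbb R$ is known; $\lambda>0$. Training data: for $m=1,\dots,M$, observation sets $Y^m=\{y^m_1,\dots,y^m_N\}$ with values $u^m(Y^m)\in\mathbb R^N$, and functions $f^m$. Collocation points $Y=\{y_1,\dots,y_K\}\subset\mathcal Y$ with $\bigcup_mY^m\subset Y$; $f^m(Y)=(f^m(y_1),\dots,f^m(y_K))$. Notation: $\mathsf U(\phi^q_k,y):=\phi^q_k(\mathsf U(\cdot,y))$ (apply $L_q$ in the first argument and evaluate at $y_k$); $\mathsf U(\phi^q_k,\phi^\ell_j):=\phi^\ell_j(\mathsf U(\phi^q_k,\cdot))$. $\mathsf U(\phi,y)\in\mathbb R^{QK}$ is the vector $(\mathsf U(\phi^1_1,y),\dots,\mathsf U(\phi^1_K,y),\dots,\mathsf U(\phi^Q_1,y),\dots,\mathsf U(\phi^Q_K,y))$; $\mathsf U(\phi,\phi)\in\mathbb R^{QK\times QK}$ is the block matrix with $(q,\ell)$ block $(\mathsf U(\phi^q_k,\phi^\ell_j))_{k,j=1}^K$; $\mathsf U(\phi,Y^m)\in\mathbb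 R^{QK\times N}$ has columns $\mathsf U(\phi,y^m_n)$. For $\alpha^m\in\mathbb R^{QK}$, $S^m(\alpha^m)=(\Phi(\mathsf U(\phi,\cdot)^T\alpha^m,y_k))_{k=1}^K$ ($K$ points of $\mathcal S$), $S(\boldsymbol\alpha)=\bigcup_{m=1}^MS^m(\alpha^m)$ ($MK$ points); for point lists $A,A'$, $\mathsf P(A,A')$ is the matrix $(\mathsf P(a,a'))_{a\in A,a'\in A'}$ and $\mathsf P(A,s)$ the vector $(\mathsf P(a,s))_{a\in A}$; $\overline P(S^m(\alpha^m))\in\mathbb R^K$ is the vector of values of $\overline P$ on $S^m(\alpha^m)$. When kernel matrices are singular, coefficient vectors are understood in the least-squares sense. *)

theory Defs
  imports "HOL-Analysis.Analysis"
begin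

text \<open>A reproducing kernel Hilbert space, presented concretely: a real Hilbert space
  of type 'h whose elements are functions on 'x via the (injective) evaluation map ev,
  containing the kernel sections k(.,y), with the reproducing property.\<close>
definition rkhs :: "('h::{real_inner,complete_space} \<Rightarrow> 'x \<Rightarrow> real) \<Rightarrow> ('x \<Rightarrow> 'x \<Rightarrow> real) \<Rightarrow> bool" where
  "rkhs ev k \<longleftrightarrow> inj ev \<and>
     (\<forall>y. \<exists>ky. ev ky = (\<lambda>x. k x y) \<and> (\<forall>v. inner ky v = ev v y))"

definition PhiF :: "(nat \<Rightarrow> ('y \<Rightarrow> real) \<Rightarrow> ('y \<Rightarrow> real)) \<Rightarrow> nat \<Rightarrow> ('y \<Rightarrow> real) \<Rightarrow> 'y \<Rightarrow> 'y \<times> real list" where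
  "PhiF L Q w y = (y, map (\<lambda>q. L q w y) [1..<Q+1])"

text \<open>U(phi^q_k, y): apply L_q to U(.,y) in the first argument and evaluate at y_k.\<close>
definition Uphi_y :: "(nat \<Rightarrow> ('y \<Rightarrow> real) \<Rightarrow> ('y \<Rightarrow> real)) \<Rightarrow> ('y \<Rightarrow> 'y \<Rightarrow> real) \<Rightarrow> (nat \<Rightarrow> 'y) \<Rightarrow> nat \<Rightarrow> nat \<Rightarrow> 'y \<Rightarrow> real" where
  "Uphi_y L U Y q k y = L q (\<lambda>x. U x y) (Y k)"

text \<open>U(phi^q_k, phi^l_j) = phi^l_j(U(phi^q_k, .)).\<close>
definition Uphiphi :: "(nat \<Rightarrow> ('y \<Rightarrow> real) \<Rightarrow> ('y \<Rightarrow> real)) \<Rightarrow> ('y \<Rightarrow> 'y \<Rightarrow> real) \<Rightarrow> (nat \<Rightarrow> 'y) \<Rightarrow> nat \<Rightarrow> nat \<Rightarrow> nat \<Rightarrow> nat \<Rightarrow> real" where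
  "Uphiphi L U Y q k l j = L l (\<lambda>y. Uphi_y L U Y q k y) (Y j)"

definition Ucomb :: "(nat \<Rightarrow> ('y \<Rightarrow> real) \<Rightarrow> ('y \<Rightarrow> real)) \<Rightarrow> ('y \<Rightarrow> 'y \<Rightarrow> real) \<Rightarrow> (nat \<Rightarrow> 'y) \<Rightarrow> nat \<Rightarrow> nat \<Rightarrow> (nat \<Rightarrow> nat \<Rightarrow> real) \<Rightarrow> 'y \<Rightarrow> real" where
  "Ucomb L U Y Q K a y = (\<Sum>q\<in>{1..Q}. \<Sum>k\<in>{1..K}. Uphi_y L U Y q k y * a q k)"

definition Spt :: "(nat \<Rightarrow> ('y \<Rightarrow> real) \<Rightarrow> ('y \<Rightarrow> real)) \<Rightarrow> ('y \<Rightarrow> 'y \<Rightarrow> real) \<Rightarrow> (nat \<Rightarrow> 'y) \<Rightarrow> nat \<Rightarrow> nat \<Rightarrow> (nat \<Rightarrow> nat \<Rightarrow> real) \<Rightarrow> nat \<Rightarrow> 'y \<times> real list" where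
  "Spt L U Y Q K a k = PhiF L Q (Ucomb L U Y Q K a) (Y k)"

end

theory Submission
  imports Defs
begin

text \<open>
  The constraints see each \<open>v\<^sup>m\<close> only through the functionals
  \<open>\<phi>\<^sup>q\<^sub>k = \<delta>\<^sub>y\<^sub>k \<circ> L\<^sub>q\<close> (the observations as well, because \<open>L\<^sub>1 = id\<close> and every
  observation point is a collocation point), and \<open>G\<close> only through its values at the
  points \<open>\<Phi>(v\<^sup>m, y\<^sub>k)\<close>. Hence projecting \<open>u\<^sup>m\<close> orthogonally onto the span of the Riesz
  representers of the \<open>\<phi>\<^sup>q\<^sub>k\<close>, and \<open>P\<close> onto the span of the kernel sections
  \<open>P(\<Phi>(u\<^sup>m, y\<^sub>k), \<cdot>)\<close>, keeps a minimiser feasible without increasing any norm; by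
  Pythagoras and \<open>\<lambda> > 0\<close> the minimiser equals its projection. For such kernel
  expansions the reproducing property turns constraints and objective into the
  finite-dimensional ones, so the coefficients of the minimiser solve the reduced problem.
\<close>

lemma linear_coeff_zero_if_quadratic_nonneg:
  fixes a b :: real
  assumes "0 \<le> b" and nonneg: "\<And>t. 0 \<le> 2 * t * a + t\<^sup>2 * b"
  shows "a = 0"
proof -
  define s where "s = 1 / (b + 1)"
  have s: "0 < s" "s * b - 2 < 0"
    using \<open>0 \<le> b\<close> by (auto simp: s_def field_simps)
  have "2 * (- s * a) * a + (- s * a)\<^sup>2 * b = a\<^sup>2 * s * (s * b - 2)"
    by (simp add: power2_eq_square algebra_simps)
  with nonneg[of "- s * a"] have "0 \<le> a\<^sup>2 * s * (s * b - 2)" by simp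
  with s have "a\<^sup>2 * s \<le> 0" by (simp add: zero_le_mult_iff)
  with s have "a\<^sup>2 \<le> 0" by (simp add: mult_le_0_iff)
  then show ?thesis by simp
qed

text \<open>
  The minimiser of \<open>\<parallel>v\<parallel>\<^sup>2 - 2 \<phi> v\<close>, which exists by completeness, represents \<open>\<phi>\<close>:
  the first variation of the energy at it in direction \<open>h\<close> is \<open>2 (inner z h - \<phi> h)\<close>.
\<close>

definition riesz_energy :: "('a::real_inner \<Rightarrow> real) \<Rightarrow> 'a \<Rightarrow> real" where
  "riesz_energy \<phi> v = (norm v)\<^sup>2 - 2 * \<phi> v"

lemma riesz_energy_bdd_below:
  assumes "bounded_linear \<phi>"
  shows "bdd_below (range (riesz_energy \<phi>))"
proof -
  obtain C where C: "\<And>x. norm (\<phi> x) \<le> norm x * C"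
    using bounded_linear.bounded[OF assms] by blast
  have "- C\<^sup>2 \<le> riesz_energy \<phi> v" for v
  proof -
    have "\<phi> v \<le> norm v * C" using C[of v] by simp
    moreover have "0 \<le> (norm v - C)\<^sup>2" by simp
    ultimately show ?thesis unfolding riesz_energy_def by (simp add: power2_diff algebra_simps)
  qed
  then show ?thesis by (auto simp: bdd_below_def)
qed

lemma riesz_energy_midpoint:
  assumes "bounded_linear \<phi>"
  shows "(dist a b)\<^sup>2 = 2 * riesz_energy \<phi> a + 2 * riesz_energy \<phi> b
                       - 4 * riesz_energy \<phi> (midpoint a b)"
proof -
  interpret bounded_linear \<phi> by fact
  have "(dist a b)\<^sup>2 = 2 * (norm a)\<^sup>2 + 2 * (norm b)\<^sup>2 - 4 * (norm (midpoint a b))\<^sup>2"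
    by (simp add: dist_norm midpoint_def power2_norm_eq_inner inner_commute algebra_simps)
  then show ?thesis
    by (simp add: riesz_energy_def midpoint_def scaleR add algebra_simps)
qed

lemma riesz_energy_add_scaleR:
  assumes "bounded_linear \<phi>"
  shows "riesz_energy \<phi> (z + t *\<^sub>R h)
           = riesz_energy \<phi> z + 2 * t * (inner z h - \<phi> h) + t\<^sup>2 * (norm h)\<^sup>2"
proof -
  interpret bounded_linear \<phi> by fact
  have "(norm (z + t *\<^sub>R h))\<^sup>2 = (norm z)\<^sup>2 + 2 * t * inner z h + t\<^sup>2 * (norm h)\<^sup>2"
    unfolding power2_norm_eq_inner
    by (simp add: inner_commute algebra_simps power2_eq_square)
  then show ?thesis
    by (simp add: riesz_energy_def scaleR add algebra_simps)
qed

lemma riesz_energy_has_minimizer: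
  fixes \<phi> :: "'a::{real_inner,complete_space} \<Rightarrow> real"
  assumes bl: "bounded_linear \<phi>"
  obtains z where "\<And>v. riesz_energy \<phi> z \<le> riesz_energy \<phi> v"
proof -
  let ?E = "riesz_energy \<phi>"
  define d where "d = Inf (range ?E)"
  have bdd: "bdd_below (range ?E)" by (rule riesz_energy_bdd_below[OF bl])
  have d_le: "d \<le> ?E v" for v
    unfolding d_def using bdd by (simp add: cInf_lower)
  have "\<exists>x. ?E x < d + inverse (real (Suc n))" for n
    using cInf_less_iff[OF _ bdd, of "d + inverse (real (Suc n))"] by (simp add: d_def)
  then obtain x where x: "\<And>n. ?E (x n) < d + inverse (real (Suc n))" by metis
  have dist_x: "(dist (x m) (x n))\<^sup>2 < 2 * inverse (real (Suc m)) + 2 * inverse (real (Suc n))" for m n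
    using riesz_energy_midpoint[OF bl, of "x m" "x n"] x[of m] x[of n]
      d_le[of "midpoint (x m) (x n)"] by linarith
  have "Cauchy x"
  proof (rule metric_CauchyI)
    fix e :: real assume "0 < e"
    then obtain N where N: "inverse (real (Suc N)) < e\<^sup>2 / 4"
      using reals_Archimedean[of "e\<^sup>2 / 4"] by auto
    have "dist (x m) (x n) < e" if "N \<le> m" "N \<le> n" for m n
    proof -
      have "inverse (real (Suc m)) \<le> inverse (real (Suc N))"
           "inverse (real (Suc n)) \<le> inverse (real (Suc N))"
        using that by (simp_all add: field_simps)
      with dist_x[of m n] N have "(dist (x m) (x n))\<^sup>2 < e\<^sup>2" by linarith
      with \<open>0 < e\<close> show ?thesis by (simp add: power_less_imp_less_base)
    qed
    then show "\<exists>M. \<forall>m\<ge>M. \<forall>n\<ge>M. dist (x m) (x n) < e" by blast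
  qed
  then obtain z where z: "x \<longlonglongrightarrow> z" using Cauchy_convergent convergent_def by blast
  have "(\<lambda>n. ?E (x n)) \<longlonglongrightarrow> ?E z"
    unfolding riesz_energy_def by (intro tendsto_intros bounded_linear.tendsto[OF bl] z)
  moreover have "(\<lambda>n. d + inverse (real (Suc n))) \<longlonglongrightarrow> d"
    using tendsto_add[OF tendsto_const LIMSEQ_inverse_real_of_nat, of d] by simp
  ultimately have "?E z \<le> d"
    using x by (intro LIMSEQ_le) (auto intro: less_imp_le)
  with d_le show ?thesis using that by (meson order_trans)
qed

theorem bounded_linear_inner_representation:
  fixes \<phi> :: "'a::{real_inner,complete_space} \<Rightarrow> real"
  assumes "bounded_linear \<phi>"
  shows "\<exists>r. \<forall>v. inner r v = \<phi> v"
proof -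
  obtain z where min: "\<And>v. riesz_energy \<phi> z \<le> riesz_energy \<phi> v"
    using riesz_energy_has_minimizer[OF assms] by blast
  have "inner z h - \<phi> h = 0" for h
  proof -
    have "0 \<le> 2 * t * (inner z h - \<phi> h) + t\<^sup>2 * (norm h)\<^sup>2" for t
      using min[of "z + t *\<^sub>R h"] riesz_energy_add_scaleR[OF assms, of z t h] by simp
    then show ?thesis by (rule linear_coeff_zero_if_quadratic_nonneg[rotated]) simp
  qed
  then show ?thesis by auto
qed

lemma orthogonal_combination:
  assumes "finite I" and "\<forall>i\<in>I. orthogonal (f i) x"
  shows "orthogonal (\<Sum>i\<in>I. c i *\<^sub>R f i) x"
  using assms by (intro orthogonal_lvsum) (auto simp: orthogonal_clauses)

lemma orthogonal_projection_onto_finite_family: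
  fixes f :: "'i \<Rightarrow> 'a::real_inner"
  assumes "finite I"
  shows "\<exists>c. \<forall>i\<in>I. orthogonal (f i) (v - (\<Sum>j\<in>I. c j *\<^sub>R f j))"
  using assms
proof (induction I arbitrary: v rule: finite_induct)
  case empty
  show ?case by simp
next
  case (insert i0 I)
  obtain c where c: "\<forall>i\<in>I. orthogonal (f i) (v - (\<Sum>j\<in>I. c j *\<^sub>R f j))"
    using insert.IH by blast
  obtain d where d: "\<forall>i\<in>I. orthogonal (f i) (f i0 - (\<Sum>j\<in>I. d j *\<^sub>R f j))"
    using insert.IH by blast
  define p where "p = (\<Sum>j\<in>I. c j *\<^sub>R f j)"
  define q where "q = (\<Sum>j\<in>I. d j *\<^sub>R f j)"
  \<comment> \<open>Gram-Schmidt step: \<open>r\<close> is the part of \<open>f i0\<close> orthogonal to the earlier vectors.\<close>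
  define r where "r = f i0 - q"
  define t where "t = inner r (v - p) / inner r r"
  have vp: "\<forall>i\<in>I. orthogonal (f i) (v - p)" and r: "\<forall>i\<in>I. orthogonal (f i) r"
    using c d by (simp_all add: p_def q_def r_def)
  have "orthogonal q (v - p)" "orthogonal q r"
    unfolding q_def using vp r insert.hyps(1) by (simp_all add: orthogonal_combination)
  moreover have "inner r (v - p) - t * inner r r = 0"
    by (cases "r = 0") (simp_all add: t_def)
  ultimately have "orthogonal (f i0) (v - (p + t *\<^sub>R r))"
    unfolding orthogonal_def r_def by (simp add: algebra_simps)
  moreover have "\<forall>i\<in>I. orthogonal (f i) (v - (p + t *\<^sub>R r))"
    using vp r by (simp add: orthogonal_def inner_diff_right inner_add_right)
  moreover have "(\<Sum>j\<in>insert i0 I. (if j = i0 then t else c j - t * d j) *\<^sub>R f j) = p + t *\<^sub>R r"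
  proof -
    have "(\<Sum>j\<in>insert i0 I. (if j = i0 then t else c j - t * d j) *\<^sub>R f j)
          = t *\<^sub>R f i0 + (\<Sum>j\<in>I. (c j - t * d j) *\<^sub>R f j)"
      using insert.hyps by simp (intro sum.cong; auto)
    also have "\<dots> = p + t *\<^sub>R r"
      by (simp add: p_def r_def q_def sum_subtractf scaleR_sum_right algebra_simps)
    finally show ?thesis .
  qed
  ultimately show ?case by (metis insert_iff)
qed

definition kernel_section :: "('h::real_inner \<Rightarrow> 'x \<Rightarrow> real) \<Rightarrow> ('x \<Rightarrow> 'x \<Rightarrow> real) \<Rightarrow> 'x \<Rightarrow> 'h" where
  "kernel_section ev k y = (SOME ky. ev ky = (\<lambda>x. k x y) \<and> (\<forall>v. inner ky v = ev v y))"

lemma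
  assumes "rkhs ev k"
  shows rkhs_eval_kernel_section: "ev (kernel_section ev k y) = (\<lambda>x. k x y)"
    and rkhs_inner_kernel_section: "inner (kernel_section ev k y) v = ev v y"
proof -
  have "\<exists>ky. ev ky = (\<lambda>x. k x y) \<and> (\<forall>v. inner ky v = ev v y)"
    using assms unfolding rkhs_def by blast
  then have "ev (kernel_section ev k y) = (\<lambda>x. k x y) \<and> (\<forall>v. inner (kernel_section ev k y) v = ev v y)"
    unfolding kernel_section_def by (rule someI_ex)
  then show "ev (kernel_section ev k y) = (\<lambda>x. k x y)" "inner (kernel_section ev k y) v = ev v y"
    by simp_all
qed

lemma rkhs_kernel_eq_inner:
  assumes "rkhs ev k"
  shows "k x y = inner (kernel_section ev k x) (kernel_section ev k y)"
  by (simp add: rkhs_inner_kernel_section rkhs_eval_kernel_section assms)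

lemma rkhs_kernel_sym:
  assumes "rkhs ev k"
  shows "k x y = k y x"
  using rkhs_kernel_eq_inner[OF assms] by (simp add: inner_commute)

locale collocation_kernels =
  fixes evU :: "'u::{real_inner,complete_space} \<Rightarrow> 'y \<Rightarrow> real"
    and Uk :: "'y \<Rightarrow> 'y \<Rightarrow> real"
    and evP :: "'p::{real_inner,complete_space} \<Rightarrow> ('y \<times> real list) \<Rightarrow> real"
    and Pk :: "('y \<times> real list) \<Rightarrow> ('y \<times> real list) \<Rightarrow> real"
    and L :: "nat \<Rightarrow> ('y \<Rightarrow> real) \<Rightarrow> ('y \<Rightarrow> real)"
    and Q K :: nat
    and Y :: "nat \<Rightarrow> 'y"
  assumes rkhsU: "rkhs evU Uk"
    and rkhsP: "rkhs evP Pk"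
    and dual: "\<forall>q\<in>{1..Q}. \<forall>k\<in>{1..K}. bounded_linear (\<lambda>v. L q (evU v) (Y k))"
begin

text \<open>The Riesz representer of \<open>\<phi>\<^sup>q\<^sub>k\<close>; as a function it is the paper's
  \<open>U(\<phi>\<^sup>q\<^sub>k, \<cdot>)\<close>.\<close>

definition phi_repr :: "nat \<Rightarrow> nat \<Rightarrow> 'u" where
  "phi_repr q k = (SOME r. \<forall>v. inner r v = L q (evU v) (Y k))"

lemma inner_phi_repr:
  assumes "q \<in> {1..Q}" "k \<in> {1..K}"
  shows "inner (phi_repr q k) v = L q (evU v) (Y k)"
proof -
  have "\<exists>r. \<forall>v. inner r v = L q (evU v) (Y k)"
    using dual assms bounded_linear_inner_representation by blast
  then show ?thesis
    unfolding phi_repr_def by (rule someI_ex[where P = "\<lambda>r. \<forall>v. inner r v = L q (evU v) (Y k)", THEN spec])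
qed

lemma eval_phi_repr:
  assumes "q \<in> {1..Q}" "k \<in> {1..K}"
  shows "evU (phi_repr q k) = Uphi_y L Uk Y q k"
proof
  fix y
  have "evU (phi_repr q k) y = inner (phi_repr q k) (kernel_section evU Uk y)"
    by (simp add: rkhs_inner_kernel_section[OF rkhsU] inner_commute)
  also have "\<dots> = Uphi_y L Uk Y q k y"
    using inner_phi_repr[OF assms] by (simp add: rkhs_eval_kernel_section[OF rkhsU] Uphi_y_def)
  finally show "evU (phi_repr q k) y = Uphi_y L Uk Y q k y" .
qed

lemma inner_phi_repr_phi_repr:
  assumes "q \<in> {1..Q}" "k \<in> {1..K}" "l \<in> {1..Q}" "j \<in> {1..K}"
  shows "inner (phi_repr q k) (phi_repr l j) = Uphiphi L Uk Y q k l j"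
proof -
  have "Uphiphi L Uk Y q k l j = L l (evU (phi_repr q k)) (Y j)"
    unfolding Uphiphi_def eval_phi_repr[OF assms(1,2)] by (simp add: eta_contract_eq)
  also have "\<dots> = inner (phi_repr l j) (phi_repr q k)"
    using inner_phi_repr[OF assms(3,4)] by simp
  finally show ?thesis by (simp add: inner_commute)
qed

definition ucomb :: "(nat \<Rightarrow> nat \<Rightarrow> real) \<Rightarrow> 'u" where
  "ucomb a = (\<Sum>q\<in>{1..Q}. \<Sum>k\<in>{1..K}. a q k *\<^sub>R phi_repr q k)"

lemma eval_ucomb: "evU (ucomb a) = Ucomb L Uk Y Q K a"
proof
  fix y
  have "evU (ucomb a) y = inner (kernel_section evU Uk y) (ucomb a)"
    by (simp add: rkhs_inner_kernel_section[OF rkhsU])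
  also have "\<dots> = (\<Sum>q\<in>{1..Q}. \<Sum>k\<in>{1..K}. Uphi_y L Uk Y q k y * a q k)"
    by (simp add: ucomb_def inner_sum_right rkhs_inner_kernel_section[OF rkhsU] eval_phi_repr
        mult.commute)
  finally show "evU (ucomb a) y = Ucomb L Uk Y Q K a y" unfolding Ucomb_def .
qed

lemma Spt_eq_PhiF_ucomb: "Spt L Uk Y Q K a k = PhiF L Q (evU (ucomb a)) (Y k)"
  unfolding Spt_def eval_ucomb ..

lemma norm_ucomb_sq:
  "(norm (ucomb a))\<^sup>2 = (\<Sum>q\<in>{1..Q}. \<Sum>k\<in>{1..K}. \<Sum>l\<in>{1..Q}. \<Sum>j\<in>{1..K}.
                            a q k * Uphiphi L Uk Y q k l j * a l j)"
proof -
  have "(norm (ucomb a))\<^sup>2 = (\<Sum>q\<in>{1..Q}. \<Sum>k\<in>{1..K}. \<Sum>l\<in>{1..Q}. \<Sum>j\<in>{1..K}.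
                            a q k * inner (phi_repr l j) (phi_repr q k) * a l j)"
    unfolding power2_norm_eq_inner ucomb_def
    by (simp add: inner_sum_left inner_sum_right sum_distrib_left mult.commute mult.left_commute)
  also have "\<dots> = (\<Sum>q\<in>{1..Q}. \<Sum>k\<in>{1..K}. \<Sum>l\<in>{1..Q}. \<Sum>j\<in>{1..K}.
                    a q k * Uphiphi L Uk Y q k l j * a l j)"
    by (intro sum.cong refl) (simp add: inner_phi_repr_phi_repr inner_commute)
  finally show ?thesis .
qed

definition pcomb :: "nat \<Rightarrow> (nat \<Rightarrow> nat \<Rightarrow> nat \<Rightarrow> real) \<Rightarrow> (nat \<Rightarrow> nat \<Rightarrow> real) \<Rightarrow> 'p" where
  "pcomb M a b = (\<Sum>m\<in>{1..M}. \<Sum>k\<in>{1..K}. b m k *\<^sub>R kernel_section evP Pk (Spt L Uk Y Q K (a m) k))"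

lemma eval_pcomb:
  "evP (pcomb M a b) s = (\<Sum>m\<in>{1..M}. \<Sum>k\<in>{1..K}. Pk (Spt L Uk Y Q K (a m) k) s * b m k)"
proof -
  have "evP (pcomb M a b) s = inner (kernel_section evP Pk s) (pcomb M a b)"
    by (simp add: rkhs_inner_kernel_section[OF rkhsP])
  also have "\<dots> = (\<Sum>m\<in>{1..M}. \<Sum>k\<in>{1..K}. Pk (Spt L Uk Y Q K (a m) k) s * b m k)"
    by (simp add: pcomb_def inner_sum_right rkhs_inner_kernel_section[OF rkhsP]
        rkhs_eval_kernel_section[OF rkhsP] rkhs_kernel_sym[OF rkhsP, of s] mult.commute)
  finally show ?thesis .
qed

lemma norm_pcomb_sq:
  "(norm (pcomb M a b))\<^sup>2 = (\<Sum>m'\<in>{1..M}. \<Sum>k'\<in>{1..K}. \<Sum>m''\<in>{1..M}. \<Sum>k''\<in>{1..K}.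
      b m' k' * Pk (Spt L Uk Y Q K (a m') k') (Spt L Uk Y Q K (a m'') k'') * b m'' k'')"
proof -
  have "(norm (pcomb M a b))\<^sup>2 = (\<Sum>m'\<in>{1..M}. \<Sum>k'\<in>{1..K}. \<Sum>m''\<in>{1..M}. \<Sum>k''\<in>{1..K}.
      b m' k' * inner (kernel_section evP Pk (Spt L Uk Y Q K (a m'') k''))
                      (kernel_section evP Pk (Spt L Uk Y Q K (a m') k')) * b m'' k'')"
    unfolding power2_norm_eq_inner pcomb_def
    by (simp add: inner_sum_left inner_sum_right sum_distrib_left mult.commute mult.left_commute)
  then show ?thesis by (simp add: rkhs_kernel_eq_inner[OF rkhsP] inner_commute)
qed

lemma L_eval_eq_if_orthogonal:
  assumes "\<forall>q\<in>{1..Q}. \<forall>k\<in>{1..K}. orthogonal (phi_repr q k) (v - w)"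
    and "q \<in> {1..Q}" "k \<in> {1..K}"
  shows "L q (evU v) (Y k) = L q (evU w) (Y k)"
  using assms by (simp add: orthogonal_def inner_diff_right inner_phi_repr)

lemma PhiF_eq_if_orthogonal:
  assumes "\<forall>q\<in>{1..Q}. \<forall>k\<in>{1..K}. orthogonal (phi_repr q k) (v - w)" and "k \<in> {1..K}"
  shows "PhiF L Q (evU v) (Y k) = PhiF L Q (evU w) (Y k)"
  using assms by (auto simp: PhiF_def intro!: map_cong L_eval_eq_if_orthogonal)

end

locale collocation_problem = collocation_kernels evU Uk evP Pk L Q K Y
  for evU :: "'u::{real_inner,complete_space} \<Rightarrow> 'y \<Rightarrow> real"
    and Uk
    and evP :: "'p::{real_inner,complete_space} \<Rightarrow> ('y \<times> real list) \<Rightarrow> real"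
    and Pk L Q K Y +
  fixes M N :: nat
    and Yobs :: "nat \<Rightarrow> nat \<Rightarrow> 'y"
    and uobs :: "nat \<Rightarrow> nat \<Rightarrow> real"
    and f :: "nat \<Rightarrow> 'y \<Rightarrow> real"
    and Pbar :: "('y \<times> real list) \<Rightarrow> real"
    and lam :: real
  assumes Q1: "Q \<ge> 1"
    and L1: "L 1 = id"
    and lam_pos: "lam > 0"
    and obs_sub: "\<forall>m\<in>{1..M}. \<forall>n\<in>{1..N}. Yobs m n \<in> Y ` {1..K}"
begin

definition feasible :: "(nat \<Rightarrow> 'u) \<Rightarrow> 'p \<Rightarrow> bool" where
  "feasible v G \<longleftrightarrow> (\<forall>m\<in>{1..M}.
     (\<forall>n\<in>{1..N}. evU (v m) (Yobs m n) = uobs m n) \<and>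
     (\<forall>k\<in>{1..K}. evP G (PhiF L Q (evU (v m)) (Y k))
                    + Pbar (PhiF L Q (evU (v m)) (Y k)) = f m (Y k)))"

definition objective :: "(nat \<Rightarrow> 'u) \<Rightarrow> 'p \<Rightarrow> real" where
  "objective v G = (norm G)\<^sup>2 + lam * (\<Sum>m\<in>{1..M}. (norm (v m))\<^sup>2)"

definition coeff_feasible :: "(nat \<Rightarrow> nat \<Rightarrow> nat \<Rightarrow> real) \<Rightarrow> (nat \<Rightarrow> nat \<Rightarrow> real) \<Rightarrow> bool" where
  "coeff_feasible a b \<longleftrightarrow> (\<forall>m\<in>{1..M}.
     (\<forall>n\<in>{1..N}. (\<Sum>q\<in>{1..Q}. \<Sum>k\<in>{1..K}. Uphi_y L Uk Y q k (Yobs m n) * a m q k) = uobs m n) \<and>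
     (\<forall>k\<in>{1..K}. (\<Sum>m'\<in>{1..M}. \<Sum>k'\<in>{1..K}.
          Pk (Spt L Uk Y Q K (a m') k') (Spt L Uk Y Q K (a m) k) * b m' k')
        = f m (Y k) - Pbar (Spt L Uk Y Q K (a m) k)))"

definition coeff_objective :: "(nat \<Rightarrow> nat \<Rightarrow> nat \<Rightarrow> real) \<Rightarrow> (nat \<Rightarrow> nat \<Rightarrow> real) \<Rightarrow> real" where
  "coeff_objective a b =
     (\<Sum>m'\<in>{1..M}. \<Sum>k'\<in>{1..K}. \<Sum>m''\<in>{1..M}. \<Sum>k''\<in>{1..K}.
        b m' k' * Pk (Spt L Uk Y Q K (a m') k') (Spt L Uk Y Q K (a m'') k'') * b m'' k'')
     + lam * (\<Sum>m\<in>{1..M}. \<Sum>q\<in>{1..Q}. \<Sum>k\<in>{1..K}. \<Sum>l\<in>{1..Q}. \<Sum>j\<in>{1..K}.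
        a m q k * Uphiphi L Uk Y q k l j * a m l j)"

lemma coeff_feasible_iff: "coeff_feasible a b \<longleftrightarrow> feasible (\<lambda>m. ucomb (a m)) (pcomb M a b)"
  unfolding coeff_feasible_def feasible_def eval_pcomb eval_ucomb Spt_def[symmetric]
  by (simp add: Ucomb_def algebra_simps)

lemma coeff_objective_eq: "coeff_objective a b = objective (\<lambda>m. ucomb (a m)) (pcomb M a b)"
  unfolding coeff_objective_def objective_def norm_pcomb_sq norm_ucomb_sq ..

lemma feasible_if_orthogonal:
  assumes "feasible v G"
    and orth_U: "\<forall>m\<in>{1..M}. \<forall>q\<in>{1..Q}. \<forall>k\<in>{1..K}. orthogonal (phi_repr q k) (v m - w m)"
    and orth_P: "\<forall>m\<in>{1..M}. \<forall>k\<in>{1..K}.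
                   orthogonal (kernel_section evP Pk (PhiF L Q (evU (v m)) (Y k))) (G - H)"
  shows "feasible w H"
  unfolding feasible_def
proof (intro ballI conjI)
  fix m assume m: "m \<in> {1..M}"
  fix n assume n: "n \<in> {1..N}"
  obtain k where k: "k \<in> {1..K}" "Yobs m n = Y k"
    using obs_sub m n by blast
  have "evU (w m) (Y k) = evU (v m) (Y k)"
    using L_eval_eq_if_orthogonal[of "v m" "w m" 1 k] orth_U m k Q1 L1 by simp
  moreover have "evU (v m) (Yobs m n) = uobs m n"
    using \<open>feasible v G\<close> m n by (simp add: feasible_def)
  ultimately show "evU (w m) (Yobs m n) = uobs m n"
    using k(2) by simp
next
  fix m assume m: "m \<in> {1..M}"
  fix k assume k: "k \<in> {1..K}"
  have "PhiF L Q (evU (w m)) (Y k) = PhiF L Q (evU (v m)) (Y k)"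
    using PhiF_eq_if_orthogonal orth_U m k by metis
  moreover have "evP H (PhiF L Q (evU (v m)) (Y k)) = evP G (PhiF L Q (evU (v m)) (Y k))"
    using orth_P m k by (simp add: orthogonal_def inner_diff_right rkhs_inner_kernel_section[OF rkhsP])
  ultimately show "evP H (PhiF L Q (evU (w m)) (Y k)) + Pbar (PhiF L Q (evU (w m)) (Y k)) = f m (Y k)"
    using \<open>feasible v G\<close> m k by (simp add: feasible_def)
qed

lemma minimizer_eq_if_orthogonal_feasible:
  assumes min: "\<forall>v G. feasible v G \<longrightarrow> objective uh Ph \<le> objective v G"
    and "feasible w H"
    and orth_w: "\<forall>m\<in>{1..M}. orthogonal (w m) (uh m - w m)"
    and orth_H: "orthogonal H (Ph - H)"
  shows "\<forall>m\<in>{1..M}. uh m = w m" and "Ph = H"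
proof -
  define residual where "residual = (\<Sum>m\<in>{1..M}. (norm (uh m - w m))\<^sup>2)"
  have "(norm (uh m))\<^sup>2 = (norm (w m))\<^sup>2 + (norm (uh m - w m))\<^sup>2" if "m \<in> {1..M}" for m
    using norm_add_Pythagorean[of "w m" "uh m - w m"] orth_w that by simp
  then have "(\<Sum>m\<in>{1..M}. (norm (uh m))\<^sup>2) = (\<Sum>m\<in>{1..M}. (norm (w m))\<^sup>2) + residual"
    unfolding residual_def by (simp add: sum.distrib[symmetric])
  moreover have "(norm Ph)\<^sup>2 = (norm H)\<^sup>2 + (norm (Ph - H))\<^sup>2"
    using norm_add_Pythagorean[OF orth_H] by simp
  ultimately have "objective uh Ph = objective w H + (norm (Ph - H))\<^sup>2 + lam * residual"
    by (simp add: objective_def algebra_simps)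
  with min \<open>feasible w H\<close> have "(norm (Ph - H))\<^sup>2 + lam * residual \<le> 0"
    by fastforce
  moreover have "0 \<le> residual" unfolding residual_def by (simp add: sum_nonneg)
  moreover have "0 \<le> lam * residual" using lam_pos \<open>0 \<le> residual\<close> by simp
  ultimately have "(norm (Ph - H))\<^sup>2 = 0" and "lam * residual = 0"
    by (smt (verit) zero_le_power2)+
  then show "Ph = H" and "\<forall>m\<in>{1..M}. uh m = w m"
    using lam_pos by (simp_all add: residual_def sum_nonneg_eq_0_iff)
qed

lemma minimizer_eq_kernel_expansion:
  assumes "feasible uh Ph"
    and min: "\<forall>v G. feasible v G \<longrightarrow> objective uh Ph \<le> objective v G"
  obtains ah bh where "\<forall>m\<in>{1..M}. uh m = ucomb (ah m)" and "Ph = pcomb M ah bh"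
proof -
  define I where "I = {1..Q} \<times> {1..K}"
  define J where "J = {1..M} \<times> {1..K}"
  define sec where "sec = (\<lambda>(m, k). kernel_section evP Pk (PhiF L Q (evU (uh m)) (Y k)))"
  have fin: "finite I" "finite J" unfolding I_def J_def by simp_all
  have "\<exists>c. \<forall>i\<in>I. orthogonal (case_prod phi_repr i) (uh m - (\<Sum>j\<in>I. c j *\<^sub>R case_prod phi_repr j))"
    for m using orthogonal_projection_onto_finite_family[OF fin(1)] .
  then obtain c where c: "\<And>m. \<forall>i\<in>I. orthogonal (case_prod phi_repr i)
                                   (uh m - (\<Sum>j\<in>I. c m j *\<^sub>R case_prod phi_repr j))"
    by metis
  obtain e where e: "\<forall>i\<in>J. orthogonal (sec i) (Ph - (\<Sum>j\<in>J. e j *\<^sub>R sec j))"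
    using orthogonal_projection_onto_finite_family[OF fin(2)] by blast
  define ah where "ah m q k = c m (q, k)" for m q k
  define bh where "bh m k = e (m, k)" for m k
  define H where "H = (\<Sum>j\<in>J. e j *\<^sub>R sec j)"
  have ucomb_ah: "ucomb (ah m) = (\<Sum>j\<in>I. c m j *\<^sub>R case_prod phi_repr j)" for m
    by (simp add: ucomb_def ah_def I_def sum.cartesian_product case_prod_beta)
  have "feasible (\<lambda>m. ucomb (ah m)) H"
  proof (rule feasible_if_orthogonal[OF \<open>feasible uh Ph\<close>])
    show "\<forall>m\<in>{1..M}. \<forall>q\<in>{1..Q}. \<forall>k\<in>{1..K}. orthogonal (phi_repr q k) (uh m - ucomb (ah m))"
      using c by (auto simp: ucomb_ah I_def)
    show "\<forall>m\<in>{1..M}. \<forall>k\<in>{1..K}.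
            orthogonal (kernel_section evP Pk (PhiF L Q (evU (uh m)) (Y k))) (Ph - H)"
      using e by (auto simp: H_def J_def sec_def)
  qed
  moreover have "\<forall>m\<in>{1..M}. orthogonal (ucomb (ah m)) (uh m - ucomb (ah m))"
    using c by (auto simp: ucomb_ah I_def intro: orthogonal_combination)
  moreover have "orthogonal H (Ph - H)"
    using e unfolding H_def J_def by (intro orthogonal_combination) auto
  ultimately have uh: "\<forall>m\<in>{1..M}. uh m = ucomb (ah m)" and "Ph = H"
    using minimizer_eq_if_orthogonal_feasible[OF min] by blast+
  have "H = (\<Sum>m\<in>{1..M}. \<Sum>k\<in>{1..K}. bh m k *\<^sub>R sec (m, k))"
    by (simp add: H_def J_def bh_def sum.cartesian_product case_prod_beta)
  also have "\<dots> = pcomb M ah bh"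
    unfolding pcomb_def by (intro sum.cong refl) (simp add: sec_def uh Spt_eq_PhiF_ucomb)
  finally have "H = pcomb M ah bh" .
  with uh \<open>Ph = H\<close> show ?thesis using that by blast
qed

theorem representer_theorem:
  assumes "feasible uh Ph"
    and "\<forall>v G. feasible v G \<longrightarrow> objective uh Ph \<le> objective v G"
  shows "\<exists>ah bh. (\<forall>m\<in>{1..M}. evU (uh m) = Ucomb L Uk Y Q K (ah m)) \<and>
    evP Ph = (\<lambda>s. \<Sum>m\<in>{1..M}. \<Sum>k\<in>{1..K}. Pk (Spt L Uk Y Q K (ah m) k) s * bh m k) \<and>
    coeff_feasible ah bh \<and> (\<forall>a b. coeff_feasible a b \<longrightarrow> coeff_objective ah bh \<le> coeff_objective a b)"
proof -
  obtain ah bh where uh: "\<forall>m\<in>{1..M}. uh m = ucomb (ah m)" and Ph: "Ph = pcomb M ah bh"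
    using minimizer_eq_kernel_expansion[OF assms] .
  have "feasible (\<lambda>m. ucomb (ah m)) (pcomb M ah bh) = feasible uh Ph"
    and "objective (\<lambda>m. ucomb (ah m)) (pcomb M ah bh) = objective uh Ph"
    using uh by (simp_all add: Ph feasible_def objective_def)
  then have "coeff_feasible ah bh" and "coeff_objective ah bh = objective uh Ph"
    using assms(1) by (simp_all add: coeff_feasible_iff coeff_objective_eq)
  moreover have "objective uh Ph \<le> coeff_objective a b" if "coeff_feasible a b" for a b
    using assms(2) that by (simp add: coeff_feasible_iff coeff_objective_eq)
  ultimately show ?thesis
    using uh Ph by (intro exI[of _ ah] exI[of _ bh]) (auto simp: eval_ucomb eval_pcomb)
qed

end

theorem theorem2:
  fixes evU :: "'u::{real_inner,complete_space} \<Rightarrow> 'y \<Rightarrow> real"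
    and Uk :: "'y \<Rightarrow> 'y \<Rightarrow> real"
    and evP :: "'p::{real_inner,complete_space} \<Rightarrow> ('y \<times> real list) \<Rightarrow> real"
    and Pk :: "('y \<times> real list) \<Rightarrow> ('y \<times> real list) \<Rightarrow> real"
    and Pbar :: "('y \<times> real list) \<Rightarrow> real"
    and L :: "nat \<Rightarrow> ('y \<Rightarrow> real) \<Rightarrow> ('y \<Rightarrow> real)"
    and Q K M N :: nat
    and lam :: real
    and Y :: "nat \<Rightarrow> 'y"
    and Yobs :: "nat \<Rightarrow> nat \<Rightarrow> 'y"
    and uobs :: "nat \<Rightarrow> nat \<Rightarrow> real"
    and f :: "nat \<Rightarrow> 'y \<Rightarrow> real"
    and uh :: "nat \<Rightarrow> 'u"
    and Ph :: 'p
  assumes rkhsU: "rkhs evU Uk"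
    and rkhsP: "rkhs evP Pk"
    and Q1: "Q \<ge> 1"
    and L1: "L 1 = id"
    and dual: "\<forall>q\<in>{1..Q}. \<forall>k\<in>{1..K}. bounded_linear (\<lambda>v. L q (evU v) (Y k))"
    and lam_pos: "lam > 0"
    and obs_sub: "\<forall>m\<in>{1..M}. \<forall>n\<in>{1..N}. Yobs m n \<in> Y ` {1..K}"
    and feas: "\<forall>m\<in>{1..M}.
                 (\<forall>n\<in>{1..N}. evU (uh m) (Yobs m n) = uobs m n) \<and>
                 (\<forall>k\<in>{1..K}. evP Ph (PhiF L Q (evU (uh m)) (Y k))
                                + Pbar (PhiF L Q (evU (uh m)) (Y k)) = f m (Y k))"
    and minim: "\<forall>(v::nat \<Rightarrow> 'u) (G::'p).
                 (\<forall>m\<in>{1..M}.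
                   (\<forall>n\<in>{1..N}. evU (v m) (Yobs m n) = uobs m n) \<and>
                   (\<forall>k\<in>{1..K}. evP G (PhiF L Q (evU (v m)) (Y k))
                                  + Pbar (PhiF L Q (evU (v m)) (Y k)) = f m (Y k)))
                 \<longrightarrow> (norm Ph)\<^sup>2 + lam * (\<Sum>m\<in>{1..M}. (norm (uh m))\<^sup>2)
                     \<le> (norm G)\<^sup>2 + lam * (\<Sum>m\<in>{1..M}. (norm (v m))\<^sup>2)"
  shows "\<exists>(ah :: nat \<Rightarrow> nat \<Rightarrow> nat \<Rightarrow> real) (bh :: nat \<Rightarrow> nat \<Rightarrow> real).
    (\<forall>m\<in>{1..M}. evU (uh m) = Ucomb L Uk Y Q K (ah m)) \<and>
    evP Ph = (\<lambda>s. \<Sum>m\<in>{1..M}. \<Sum>k\<in>{1..K}. Pk (Spt L Uk Y Q K (ah m) k) s * bh m k) \<and>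
    (let feasF = (\<lambda>(a :: nat \<Rightarrow> nat \<Rightarrow> nat \<Rightarrow> real) (b :: nat \<Rightarrow> nat \<Rightarrow> real).
           \<forall>m\<in>{1..M}.
             (\<forall>n\<in>{1..N}. (\<Sum>q\<in>{1..Q}. \<Sum>k\<in>{1..K}. Uphi_y L Uk Y q k (Yobs m n) * a m q k) = uobs m n) \<and>
             (\<forall>k\<in>{1..K}. (\<Sum>m'\<in>{1..M}. \<Sum>k'\<in>{1..K}.
                  Pk (Spt L Uk Y Q K (a m') k') (Spt L Uk Y Q K (a m) k) * b m' k')
                = f m (Y k) - Pbar (Spt L Uk Y Q K (a m) k)));
         objF = (\<lambda>(a :: nat \<Rightarrow> nat \<Rightarrow> nat \<Rightarrow> real) (b :: nat \<Rightarrow> nat \<Rightarrow> real).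
           (\<Sum>m'\<in>{1..M}. \<Sum>k'\<in>{1..K}. \<Sum>m''\<in>{1..M}. \<Sum>k''\<in>{1..K}.
              b m' k' * Pk (Spt L Uk Y Q K (a m') k') (Spt L Uk Y Q K (a m'') k'') * b m'' k'')
           + lam * (\<Sum>m\<in>{1..M}. \<Sum>q\<in>{1..Q}. \<Sum>k\<in>{1..K}. \<Sum>l\<in>{1..Q}. \<Sum>j\<in>{1..K}.
              a m q k * Uphiphi L Uk Y q k l j * a m l j))
     in feasF ah bh \<and> (\<forall>a b. feasF a b \<longrightarrow> objF ah bh \<le> objF a b))"
  proof -
  interpret collocation_problem evU Uk evP Pk L Q K Y M N Yobs uobs f Pbar lam
    using rkhsU rkhsP dual Q1 L1 lam_pos obs_sub by unfold_locales
  have "feasible uh Ph" and "\<forall>v G. feasible v G \<longrightarrow> objective uh Ph \<le> objective v G"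
    using feas minim unfolding feasible_def objective_def by blast+
  then show ?thesis
    unfolding Let_def coeff_feasible_def[symmetric] coeff_objective_def[symmetric]
    by (rule representer_theorem)
qed

end
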